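(* Let $\mathbf{c}\in\mathbb{R}^2$, let $\mathbf{e}_\pm\in\mathbb{R}^2$ be unit vectors with $\mathbf{e}_+\cdot\mathbf{e}_-=\cos(2\theta)$ where $2\theta\in(0,2\pi)$, let $\Gamma_\pm:=\{\mathbf{c}+t\mathbf{e}_\pm:t>0\}$ and $\Gamma:=\overline{\Gamma}_-\cup\overline{\Gamma}_+$. For $p,\tilde p\in\mathscr{C}^\infty_0(\mathbb{R}_+)$ define $\Theta_\Gamma(p,\tilde p)$ on $\Gamma$ by $\Theta_\Gamma(p,\tilde p)(\mathbf{c}+t\mathbf{e}_\pm):=(p(t)\pm\tilde p(t))/\sqrt2$ for $t>0$, and define $\langle\mathscr{A}_\Gamma(u),v\rangle_\Gamma:=\int_{\Gamma\times\Gamma}u(\mathbf{y})v(\mathbf{x})|\mathbf{x}-\mathbf{y}|^{-1/2}\,d\mathbf{x}\,d\mathbf{y}$. For $\alpha\in[0,2\pi)$ let $\mathfrak{K}_\alpha(\tau):=\big(4\sin^2(\alpha)+(\sqrt\tau-1/\sqrt\tau)^2\big)^{-1/4}$, $\tau>0$, and define $\mathscr{A}^\pm_\theta$ by $$\langle\mathscr{A}^\pm_\theta(p),q\rangle_{\mathbb{R}_+}:=\int_{\mathbb{R}_+\times\mathbb{R}_+}\big(\mathfrak{K}_0(t/s)\pm\mathfrak{K}_\theta(t/s)\big)p(s)q(t)(st)^{-1/4}\,ds\,dt.$$ Then for all $p,\tilde p,q,\tilde q\in\mathscr{C}^\infty_0(\mathbb{R}_+)$, $$\langle\mathscr{A}_\Gamma\Theta_\Gamma(p,\tilde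 p),\Theta_\Gamma(q,\tilde q)\rangle_\Gamma=\langle\mathscr{A}^+_\theta(p),q\rangle_{\mathbb{R}_+}+\langle\mathscr{A}^-_\theta(\tilde p),\tilde q\rangle_{\mathbb{R}_+}.$$
   Context: $\mathscr{C}^\infty_0(\mathbb{R}_+)$ denotes the smooth functions on $\mathbb{R}_+=[0,\infty)$ whose support is bounded and contained in $(0,+\infty)$. Integrals over $\Gamma$ are with respect to arc length. *)

theory Defs
  imports "HOL-Analysis.Analysis"
begin

text \<open>Test functions: smooth on (0,\<infinity>), support bounded and contained in (0,\<infinity>).
  Only the values at t > 0 matter.\<close>
definition C0inf_Rplus :: "(real \<Rightarrow> real) \<Rightarrow> bool" where
  "C0inf_Rplus p \<longleftrightarrow>
     (\<forall>k::nat. \<forall>t>0. ((deriv ^^ k) p) differentiable (at t)) \<and>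
     (\<exists>a b. 0 < a \<and> a \<le> b \<and> (\<forall>t>0. (t < a \<or> b < t) \<longrightarrow> p t = 0))"

text \<open>Ray-union \<Gamma> = closure of {c + t e+} \<union> closure of {c + t e-}, and the function
  \<Theta>_\<Gamma>(p, pt) on \<Gamma> (the value at the vertex c, a null set, is set to 0).\<close>
definition Theta_Gamma ::
  "real^2 \<Rightarrow> real^2 \<Rightarrow> real^2 \<Rightarrow> (real \<Rightarrow> real) \<Rightarrow> (real \<Rightarrow> real) \<Rightarrow> real^2 \<Rightarrow> real" where
  "Theta_Gamma c ep em p pt x =
     (if \<exists>t>0. x = c + t *\<^sub>R ep then
        (let t = (THE t. t > 0 \<and> x = c + t *\<^sub>R ep) in (p t + pt t) / sqrt 2)
      else if \<exists>t>0. x = c + t *\<^sub>R em then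
        (let t = (THE t. t > 0 \<and> x = c + t *\<^sub>R em) in (p t - pt t) / sqrt 2)
      else 0)"

text \<open>Integral over \<Gamma> \<times> \<Gamma> w.r.t. arc length (on each factor), computed through the
  arc-length parametrisations t \<mapsto> c + t e_pm, t > 0, of the two rays (the vertex is a null set).\<close>
definition Gamma_Gamma_integral ::
  "real^2 \<Rightarrow> real^2 \<Rightarrow> real^2 \<Rightarrow> (real^2 \<Rightarrow> real^2 \<Rightarrow> real) \<Rightarrow> real" where
  "Gamma_Gamma_integral c ep em F =
     (\<Sum>a\<in>{True, False}. \<Sum>b\<in>{True, False}.
        (LINT z : {0<..} \<times> {0<..} | lborel \<Otimes>\<^sub>M lborel.
           F (c + fst z *\<^sub>R (if a then ep else em)) (c + snd z *\<^sub>R (if b then ep else em))))"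

definition A_Gamma_pairing ::
  "real^2 \<Rightarrow> real^2 \<Rightarrow> real^2 \<Rightarrow> (real^2 \<Rightarrow> real) \<Rightarrow> (real^2 \<Rightarrow> real) \<Rightarrow> real" where
  "A_Gamma_pairing c ep em u v =
     Gamma_Gamma_integral c ep em (\<lambda>y x. u y * v x * norm (x - y) powr (-1/2))"

definition frakK :: "real \<Rightarrow> real \<Rightarrow> real" where
  "frakK \<alpha> \<tau> = (4 * (sin \<alpha>)^2 + (sqrt \<tau> - 1 / sqrt \<tau>)^2) powr (-1/4)"

text \<open>\<langle>A^\<plusminus>_\<theta> p, q\<rangle>_{R+}; \<sigma> = 1 for +, \<sigma> = -1 for -. The pair z = (s,t).\<close>
definition A_theta_pairing ::
  "real \<Rightarrow> real \<Rightarrow> (real \<Rightarrow> real) \<Rightarrow> (real \<Rightarrow> real) \<Rightarrow> real" where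
  "A_theta_pairing \<sigma> \<theta> p q =
     (LINT z : {0<..} \<times> {0<..} | lborel \<Otimes>\<^sub>M lborel.
        (frakK 0 (snd z / fst z) + \<sigma> * frakK \<theta> (snd z / fst z)) * p (fst z) * q (snd z)
          * (fst z * snd z) powr (-1/4))"

end

theory Submission
  imports Defs
begin

(* Parametrise both rays by arc length. On one ray |x - y| = |t - s|, across the two rays the
   law of cosines gives |t e_b - s e_a|^2 = s^2 + t^2 - 2 s t cos(2 theta), and
   (s t)^(-1/4) K_alpha(t/s) = (s^2 + t^2 - 2 s t cos(2 alpha))^(-1/4) turns both kernels of
   A^+-_theta into these two. Expanding Theta_Gamma, the two same-ray integrals contribute
   (p q + p~ q~) times the same-ray kernel and the two cross-ray integrals (p q - p~ q~) times
   the cross-ray kernel. Splitting and recombining the integrals is legitimate because both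
   kernels are bounded by C (|t - s|^(-1/2) + 1) on squares [a,b]^2 with a > 0, which is
   integrable there, while the test functions are bounded and supported in such a square. *)

lemma integrable_abs_diff_powr_square:
  fixes a b r :: real
  assumes "a \<le> b" and "-1 < r"
  shows "integrable (lborel \<Otimes>\<^sub>M lborel)
     (\<lambda>z. indicator ({a..b} \<times> {a..b}) z * \<bar>snd z - fst z\<bar> powr r)"
proof (rule integrableI_bounded)
  define L where "L = b - a"
  define g where "g u = indicator {0..L} u * u powr r" for u :: real
  have [measurable]: "g \<in> borel_measurable borel"
    unfolding g_def by measurable
  have g_nonneg: "0 \<le> g u" for u
    by (simp add: g_def indicator_def)
  define G where "G = ennreal (L powr (r + 1) / (r + 1))"
  have "(\<integral>\<^sup>+u. ennreal (g u) \<partial>lborel) = G"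
    using nn_integral_has_integral_lebesgue[OF _ has_integral_powr_from_0[of r L]] assms
    by (simp add: g_def G_def L_def)
  then have right: "(\<integral>\<^sup>+t. ennreal (g (t - s)) \<partial>lborel) = G"
    and left: "(\<integral>\<^sup>+t. ennreal (g (s - t)) \<partial>lborel) = G" for s
    using nn_integral_real_affine[of "\<lambda>u. ennreal (g u)" 1 "-s"]
      nn_integral_real_affine[of "\<lambda>u. ennreal (g u)" "-1" s]
    by simp_all
  have inner: "(\<integral>\<^sup>+t. ennreal (indicator ({a..b} \<times> {a..b}) (s, t) * \<bar>t - s\<bar> powr r) \<partial>lborel)
      \<le> indicator {a..b} s * (2 * G)" for s
  proof (cases "s \<in> {a..b}")
    case s: True
    have "(\<integral>\<^sup>+t. ennreal (indicator ({a..b} \<times> {a..b}) (s, t) * \<bar>t - s\<bar> powr r) \<partial>lborel)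
        \<le> (\<integral>\<^sup>+t. ennreal (g (t - s)) + ennreal (g (s - t)) \<partial>lborel)"
    proof (rule nn_integral_mono)
      fix t
      have "indicator ({a..b} \<times> {a..b}) (s, t) * \<bar>t - s\<bar> powr r \<le> g (t - s) + g (s - t)"
        using s g_nonneg by (cases "s \<le> t") (auto simp: g_def indicator_def L_def)
      then show "ennreal (indicator ({a..b} \<times> {a..b}) (s, t) * \<bar>t - s\<bar> powr r)
          \<le> ennreal (g (t - s)) + ennreal (g (s - t))"
        using g_nonneg by (simp add: ennreal_plus[symmetric] del: ennreal_plus)
    qed
    also have "\<dots> = 2 * G"
      by (subst nn_integral_add) (auto simp: right left mult_2)
    finally show ?thesis
      using s by simp
  next
    case False
    then have "indicator ({a..b} \<times> {a..b}) (s, t) = (0::real)" for t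
      by (auto simp: indicator_def)
    with False show ?thesis
      by simp
  qed
  have "(\<integral>\<^sup>+z. ennreal (norm (indicator ({a..b} \<times> {a..b}) z * \<bar>snd z - fst z\<bar> powr r))
          \<partial>(lborel \<Otimes>\<^sub>M lborel))
      = (\<integral>\<^sup>+s. \<integral>\<^sup>+t. ennreal (indicator ({a..b} \<times> {a..b}) (s, t) * \<bar>t - s\<bar> powr r) \<partial>lborel \<partial>lborel)"
    by (simp add: lborel.nn_integral_fst[symmetric] abs_mult)
  also have "\<dots> \<le> (\<integral>\<^sup>+s. indicator {a..b} s * (2 * G) \<partial>lborel)"
    by (intro nn_integral_mono inner)
  also have "\<dots> = 2 * G * emeasure lborel {a..b}"
    by (simp add: nn_integral_cmult_indicator mult.commute)
  also have "\<dots> < \<infinity>"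
    using assms by (simp add: G_def ennreal_mult_less_top)
  finally show "(\<integral>\<^sup>+z. ennreal (norm (indicator ({a..b} \<times> {a..b}) z * \<bar>snd z - fst z\<bar> powr r))
      \<partial>(lborel \<Otimes>\<^sub>M lborel)) < \<infinity>" .
qed measurable

definition Cc_Rplus :: "(real \<Rightarrow> real) \<Rightarrow> bool" where
  "Cc_Rplus f \<longleftrightarrow> continuous_on {0<..} f \<and>
     (\<exists>a b. 0 < a \<and> a \<le> b \<and> (\<forall>t>0. (t < a \<or> b < t) \<longrightarrow> f t = 0))"

lemma Cc_Rplus_if_C0inf_Rplus:
  assumes "C0inf_Rplus f"
  shows "Cc_Rplus f"
proof -
  have "\<forall>t>0. f differentiable (at t)"
    using assms unfolding C0inf_Rplus_def by (metis funpow_0)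
  then have "continuous_on {0<..} f"
    by (intro continuous_at_imp_continuous_on) (auto intro: differentiable_imp_continuous_within)
  with assms show ?thesis
    unfolding C0inf_Rplus_def Cc_Rplus_def by blast
qed

lemma Cc_Rplus_common_support:
  assumes "Cc_Rplus f" and "Cc_Rplus g"
  obtains a b where "0 < a" and "a \<le> b"
    and "\<And>t. 0 < t \<Longrightarrow> t \<notin> {a..b} \<Longrightarrow> f t = 0 \<and> g t = 0"
proof -
  obtain a1 b1 where "0 < a1" "a1 \<le> b1" "\<forall>t>0. (t < a1 \<or> b1 < t) \<longrightarrow> f t = 0"
    using assms(1) unfolding Cc_Rplus_def by blast
  moreover obtain a2 b2 where "0 < a2" "a2 \<le> b2" "\<forall>t>0. (t < a2 \<or> b2 < t) \<longrightarrow> g t = 0"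
    using assms(2) unfolding Cc_Rplus_def by blast
  ultimately show ?thesis
    by (intro that[of "min a1 a2" "max b1 b2"]) auto
qed

lemma Cc_Rplus_lincomb:
  assumes "Cc_Rplus f" and "Cc_Rplus g"
  shows "Cc_Rplus (\<lambda>s. x * f s + y * g s)"
proof -
  obtain a b where "0 < a" "a \<le> b" "\<And>t. 0 < t \<Longrightarrow> t \<notin> {a..b} \<Longrightarrow> f t = 0 \<and> g t = 0"
    using Cc_Rplus_common_support[OF assms] by blast
  moreover have "continuous_on {0<..} (\<lambda>s. x * f s + y * g s)"
    using assms unfolding Cc_Rplus_def by (intro continuous_intros) auto
  ultimately show ?thesis
    unfolding Cc_Rplus_def by (intro conjI exI[of _ a] exI[of _ b]) auto
qed

lemma Cc_Rplus_bounded: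
  assumes "Cc_Rplus f"
  obtains M where "\<And>t. 0 < t \<Longrightarrow> \<bar>f t\<bar> \<le> M"
proof -
  obtain a b where ab: "0 < a" "a \<le> b" "\<forall>t>0. (t < a \<or> b < t) \<longrightarrow> f t = 0"
    using assms unfolding Cc_Rplus_def by blast
  have "compact (f ` {a..b})"
    using assms ab unfolding Cc_Rplus_def
    by (intro compact_continuous_image) (auto intro: continuous_on_subset)
  then obtain M where M: "\<And>t. t \<in> {a..b} \<Longrightarrow> \<bar>f t\<bar> \<le> M"
    using compact_imp_bounded bounded_iff by (metis imageI real_norm_def)
  show ?thesis
  proof (rule that[of "max M 0"])
    fix t :: real
    assume "0 < t"
    then show "\<bar>f t\<bar> \<le> max M 0"
      using ab M[of t] by (cases "t \<in> {a..b}") auto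
  qed
qed

lemma borel_measurable_Cc_Rplus_indicator:
  assumes "Cc_Rplus f"
  shows "(\<lambda>s. indicator {0<..} s * f s) \<in> borel_measurable borel"
  using borel_measurable_continuous_on_indicator[of "{0<..}" f] assms
  by (simp add: Cc_Rplus_def)

definition weakly_singular_kernel :: "(real \<times> real \<Rightarrow> real) \<Rightarrow> bool" where
  "weakly_singular_kernel k \<longleftrightarrow> k \<in> borel_measurable (lborel \<Otimes>\<^sub>M lborel) \<and>
     (\<forall>a>0. \<forall>b. \<exists>C. \<forall>s\<in>{a..b}. \<forall>t\<in>{a..b}. \<bar>k (s, t)\<bar> \<le> C * (\<bar>t - s\<bar> powr (-1/2) + 1))"

lemma weakly_singular_kernel_lincomb:
  assumes "weakly_singular_kernel k1" and "weakly_singular_kernel k2"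
  shows "weakly_singular_kernel (\<lambda>z. x * k1 z + y * k2 z)"
  unfolding weakly_singular_kernel_def
proof (intro conjI allI impI)
  have [measurable]: "k1 \<in> borel_measurable (lborel \<Otimes>\<^sub>M lborel)"
    "k2 \<in> borel_measurable (lborel \<Otimes>\<^sub>M lborel)"
    using assms unfolding weakly_singular_kernel_def by auto
  show "(\<lambda>z. x * k1 z + y * k2 z) \<in> borel_measurable (lborel \<Otimes>\<^sub>M lborel)"
    by measurable
  fix a b :: real
  assume "0 < a"
  then obtain C1 C2 where
    C1: "\<forall>s\<in>{a..b}. \<forall>t\<in>{a..b}. \<bar>k1 (s, t)\<bar> \<le> C1 * (\<bar>t - s\<bar> powr (-1/2) + 1)" and
    C2: "\<forall>s\<in>{a..b}. \<forall>t\<in>{a..b}. \<bar>k2 (s, t)\<bar> \<le> C2 * (\<bar>t - s\<bar> powr (-1/2) + 1)"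
    using assms unfolding weakly_singular_kernel_def by meson
  show "\<exists>C. \<forall>s\<in>{a..b}. \<forall>t\<in>{a..b}.
      \<bar>x * k1 (s, t) + y * k2 (s, t)\<bar> \<le> C * (\<bar>t - s\<bar> powr (-1/2) + 1)"
  proof (intro exI[of _ "\<bar>x\<bar> * C1 + \<bar>y\<bar> * C2"] ballI)
    fix s t
    assume st: "s \<in> {a..b}" "t \<in> {a..b}"
    have "\<bar>x * k1 (s, t) + y * k2 (s, t)\<bar> \<le> \<bar>x\<bar> * \<bar>k1 (s, t)\<bar> + \<bar>y\<bar> * \<bar>k2 (s, t)\<bar>"
      by (simp add: abs_mult abs_triangle_ineq[THEN order_trans])
    also have "\<dots> \<le> \<bar>x\<bar> * (C1 * (\<bar>t - s\<bar> powr (-1/2) + 1)) + \<bar>y\<bar> * (C2 * (\<bar>t - s\<bar> powr (-1/2) + 1))"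
      using C1 C2 st by (intro add_mono mult_left_mono) auto
    finally show "\<bar>x * k1 (s, t) + y * k2 (s, t)\<bar> \<le> (\<bar>x\<bar> * C1 + \<bar>y\<bar> * C2) * (\<bar>t - s\<bar> powr (-1/2) + 1)"
      by (simp add: algebra_simps)
  qed
qed

lemma set_integrable_weakly_singular_kernel:
  assumes f: "Cc_Rplus f" and g: "Cc_Rplus g" and k: "weakly_singular_kernel k"
  shows "set_integrable (lborel \<Otimes>\<^sub>M lborel) ({0<..} \<times> {0<..}) (\<lambda>z. f (fst z) * g (snd z) * k z)"
proof -
  obtain a b where ab: "0 < a" "a \<le> b"
    and supp: "\<And>t. 0 < t \<Longrightarrow> t \<notin> {a..b} \<Longrightarrow> f t = 0 \<and> g t = 0"
    using Cc_Rplus_common_support[OF f g] by blast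
  obtain Mf Mg where Mf: "\<And>t. 0 < t \<Longrightarrow> \<bar>f t\<bar> \<le> Mf" and Mg: "\<And>t. 0 < t \<Longrightarrow> \<bar>g t\<bar> \<le> Mg"
    using Cc_Rplus_bounded f g by metis
  obtain C where C: "\<And>s t. s \<in> {a..b} \<Longrightarrow> t \<in> {a..b} \<Longrightarrow> \<bar>k (s, t)\<bar> \<le> C * (\<bar>t - s\<bar> powr (-1/2) + 1)"
    using k ab unfolding weakly_singular_kernel_def by meson
  have bounds_nonneg: "0 \<le> Mf" "0 \<le> Mg" "0 \<le> C"
    using Mf[of 1] Mg[of 1] C[of a a] ab by (auto intro: order_trans[OF abs_ge_zero])
  define F where "F s = indicator {0<..} s * f s" for s
  define G where "G s = indicator {0<..} s * g s" for s
  define B where "B = {a..b} \<times> {a..b}"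
  have [measurable]: "F \<in> borel_measurable borel" "G \<in> borel_measurable borel"
    "k \<in> borel_measurable (lborel \<Otimes>\<^sub>M lborel)"
    using borel_measurable_Cc_Rplus_indicator f g k unfolding F_def G_def weakly_singular_kernel_def by auto
  have "B \<in> sets (lborel \<Otimes>\<^sub>M lborel)" and "emeasure (lborel \<Otimes>\<^sub>M lborel) B < \<infinity>"
    using ab unfolding B_def by (auto simp: lborel.emeasure_pair_measure_Times ennreal_mult_less_top)
  then have dom: "integrable (lborel \<Otimes>\<^sub>M lborel)
      (\<lambda>z. Mf * Mg * C * (indicator B z * \<bar>snd z - fst z\<bar> powr (-1/2) + indicator B z))"
    using integrable_abs_diff_powr_square[OF ab(2), of "-1/2"] unfolding B_def
    by (intro integrable_mult_right integrable_add integrable_real_indicator) auto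
  have "integrable (lborel \<Otimes>\<^sub>M lborel) (\<lambda>z. F (fst z) * G (snd z) * k z)"
  proof (rule Bochner_Integration.integrable_bound[OF dom _ AE_I2])
    fix z :: "real \<times> real"
    obtain s t where z: "z = (s, t)"
      by (cases z)
    have "\<bar>F s * G t * k (s, t)\<bar>
        \<le> Mf * Mg * C * (indicator B z * \<bar>t - s\<bar> powr (-1/2) + indicator B z)"
    proof (cases "0 < s \<and> 0 < t \<and> z \<in> B")
      case True
      then have st: "s \<in> {a..b}" "t \<in> {a..b}"
        by (auto simp: z B_def)
      have "\<bar>F s * G t * k (s, t)\<bar> = \<bar>f s\<bar> * \<bar>g t\<bar> * \<bar>k (s, t)\<bar>"
        using True by (simp add: F_def G_def abs_mult)
      also have "\<dots> \<le> Mf * Mg * (C * (\<bar>t - s\<bar> powr (-1/2) + 1))"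
        using Mf Mg C[OF st] True bounds_nonneg by (intro mult_mono) auto
      finally show ?thesis
        using True by (simp add: algebra_simps)
    next
      case False
      then have "F s * G t = 0"
        using supp by (auto simp: F_def G_def z B_def indicator_def)
      with bounds_nonneg show ?thesis
        by (auto simp: z)
    qed
    then show "norm (F (fst z) * G (snd z) * k z)
        \<le> norm (Mf * Mg * C * (indicator B z * \<bar>snd z - fst z\<bar> powr (-1/2) + indicator B z))"
      by (simp add: z)
  qed measurable
  moreover have "(\<lambda>z. indicator ({0<..} \<times> {0<..}) z *\<^sub>R (f (fst z) * g (snd z) * k z))
      = (\<lambda>z. F (fst z) * G (snd z) * k z)"
    by (auto simp: F_def G_def indicator_times)
  ultimately show ?thesis
    unfolding set_integrable_def by simp
qed

text \<open>For unit vectors \<open>e\<^sub>1, e\<^sub>2\<close> with \<open>e\<^sub>1 \<bullet> e\<^sub>2 = \<gamma>\<close> this is \<open>|t e\<^sub>2 - s e\<^sub>1| powr (-1/2)\<close>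
  (law of cosines); \<open>\<gamma> = 1\<close> gives the kernel on a single ray.\<close>
definition ray_kernel :: "real \<Rightarrow> real \<times> real \<Rightarrow> real" where
  "ray_kernel \<gamma> z = (fst z ^ 2 + snd z ^ 2 - 2 * \<gamma> * fst z * snd z) powr (-1/4)"

lemma square_powr_neg_quarter: "((x::real) ^ 2) powr (-1/4) = \<bar>x\<bar> powr (-1/2)"
proof -
  have "(x ^ 2) powr (-1/4) = ((x ^ 2) powr (1/2)) powr (-1/2)"
    unfolding powr_powr by simp
  also have "\<dots> = \<bar>x\<bar> powr (-1/2)"
    by (simp add: square_powr_half)
  finally show ?thesis .
qed

lemma ray_kernel_one: "ray_kernel 1 z = \<bar>snd z - fst z\<bar> powr (-1/2)"
  unfolding ray_kernel_def using square_powr_neg_quarter[of "snd z - fst z"]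
  by (simp add: power2_diff algebra_simps)

lemma weakly_singular_ray_kernel:
  assumes "\<gamma> \<le> 1"
  shows "weakly_singular_kernel (ray_kernel \<gamma>)"
  unfolding weakly_singular_kernel_def
proof (intro conjI allI impI)
  show "ray_kernel \<gamma> \<in> borel_measurable (lborel \<Otimes>\<^sub>M lborel)"
    unfolding ray_kernel_def by measurable
  fix a b :: real
  assume a: "0 < a"
  show "\<exists>C. \<forall>s\<in>{a..b}. \<forall>t\<in>{a..b}. \<bar>ray_kernel \<gamma> (s, t)\<bar> \<le> C * (\<bar>t - s\<bar> powr (-1/2) + 1)"
  proof (cases "\<gamma> = 1")
    case True
    then show ?thesis
      by (intro exI[of _ 1]) (simp add: ray_kernel_one)
  next
    case False
    \<comment> \<open>for \<open>\<gamma> < 1\<close> the kernel is bounded on squares away from the origin\<close>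
    define \<delta> where "\<delta> = 2 * a ^ 2 * (1 - \<gamma>)"
    have \<delta>: "0 < \<delta>"
      using a assms False by (simp add: \<delta>_def)
    show ?thesis
    proof (intro exI[of _ "\<delta> powr (-1/4)"] ballI)
      fix s t
      assume "s \<in> {a..b}" "t \<in> {a..b}"
      then have "a * a \<le> s * t"
        using a by (intro mult_mono) auto
      then have "\<delta> \<le> 2 * s * t * (1 - \<gamma>)"
        using assms False by (simp add: \<delta>_def power2_eq_square)
      also have "\<dots> \<le> s ^ 2 + t ^ 2 - 2 * \<gamma> * s * t"
        using sum_squares_ge_zero[of "t - s" 0] by (simp add: power2_eq_square algebra_simps)
      finally have "ray_kernel \<gamma> (s, t) \<le> \<delta> powr (-1/4)"
        unfolding ray_kernel_def using \<delta> by (intro powr_mono2') auto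
      also have "\<dots> \<le> \<delta> powr (-1/4) * (\<bar>t - s\<bar> powr (-1/2) + 1)"
        using mult_left_mono[of 1 "\<bar>t - s\<bar> powr (-1/2) + 1" "\<delta> powr (-1/4)"] by simp
      finally show "\<bar>ray_kernel \<gamma> (s, t)\<bar> \<le> \<delta> powr (-1/4) * (\<bar>t - s\<bar> powr (-1/2) + 1)"
        by (simp add: ray_kernel_def)
    qed
  qed
qed

lemma norm_diff_scaleR_unit_powr:
  fixes e1 e2 :: "'a::real_inner"
  assumes "norm e1 = 1" and "norm e2 = 1"
  shows "norm (t *\<^sub>R e2 - s *\<^sub>R e1) powr (-1/2) = ray_kernel (e1 \<bullet> e2) (s, t)"
proof -
  have "e1 \<bullet> e1 = 1" and "e2 \<bullet> e2 = 1"
    using assms by (simp_all add: dot_square_norm)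
  then have "(t *\<^sub>R e2 - s *\<^sub>R e1) \<bullet> (t *\<^sub>R e2 - s *\<^sub>R e1) = s ^ 2 + t ^ 2 - 2 * (e1 \<bullet> e2) * s * t"
    by (simp add: inner_diff_left inner_diff_right inner_commute[of e2 e1] power2_eq_square algebra_simps)
  then have "norm (t *\<^sub>R e2 - s *\<^sub>R e1) ^ 2 = s ^ 2 + t ^ 2 - 2 * (e1 \<bullet> e2) * s * t"
    by (simp only: power2_norm_eq_inner)
  then show ?thesis
    by (metis abs_norm_cancel fst_conv ray_kernel_def snd_conv square_powr_neg_quarter)
qed

lemma frakK_scaled_eq_ray_kernel:
  assumes s: "0 < s" and t: "0 < t"
  shows "frakK \<alpha> (t / s) * (s * t) powr (-1/4) = ray_kernel (cos (2 * \<alpha>)) (s, t)"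
proof -
  have "(sqrt (t / s) - 1 / sqrt (t / s)) ^ 2 = t / s - 2 + s / t"
    using s t by (simp add: power2_diff real_sqrt_divide power_divide field_simps power2_eq_square)
  then have "4 * sin \<alpha> ^ 2 + (sqrt (t / s) - 1 / sqrt (t / s)) ^ 2
      = (s ^ 2 + t ^ 2 - 2 * cos (2 * \<alpha>) * s * t) / (s * t)"
    unfolding cos_double_sin using s t by (simp add: field_simps power2_eq_square)
  then have "frakK \<alpha> (t / s) = (s ^ 2 + t ^ 2 - 2 * cos (2 * \<alpha>) * s * t) powr (-1/4) / (s * t) powr (-1/4)"
    by (simp add: frakK_def powr_divide)
  then show ?thesis
    using s t by (simp add: ray_kernel_def)
qed

lemma Theta_Gamma_plus_ray:
  assumes "ep \<noteq> 0" and "0 < t"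
  shows "Theta_Gamma c ep em p pt (c + t *\<^sub>R ep) = (p t + pt t) / sqrt 2"
proof -
  have "(THE u. 0 < u \<and> c + t *\<^sub>R ep = c + u *\<^sub>R ep) = t"
    using assms by (intro the_equality) auto
  with assms show ?thesis
    unfolding Theta_Gamma_def by auto
qed

lemma Theta_Gamma_minus_ray:
  assumes "em \<noteq> ep" and "norm em = norm ep" and "0 < t"
  shows "Theta_Gamma c ep em p pt (c + t *\<^sub>R em) = (p t - pt t) / sqrt 2"
proof -
  have "em \<noteq> 0"
    using assms(1,2) by auto
  have not_plus: "c + t *\<^sub>R em \<noteq> c + u *\<^sub>R ep" if "0 < u" for u
  proof
    assume "c + t *\<^sub>R em = c + u *\<^sub>R ep"
    then have eq: "t *\<^sub>R em = u *\<^sub>R ep"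
      by simp
    then have "t * norm em = u * norm em"
      using assms(2) \<open>0 < t\<close> \<open>0 < u\<close> by (metis norm_scaleR abs_of_pos)
    with \<open>em \<noteq> 0\<close> have "t = u"
      by simp
    with eq \<open>0 < t\<close> assms(1) show False
      by simp
  qed
  from \<open>em \<noteq> 0\<close> have "(THE u. 0 < u \<and> c + t *\<^sub>R em = c + u *\<^sub>R em) = t"
    using assms(3) by (intro the_equality) auto
  with not_plus assms(3) show ?thesis
    unfolding Theta_Gamma_def by auto
qed

lemma A_Gamma_pairing_Theta_Gamma_eq_sum:
  fixes c ep em :: "real^2"
  assumes unit: "norm ep = 1" "norm em = 1" and "ep \<noteq> em"
  shows "A_Gamma_pairing c ep em (Theta_Gamma c ep em p pt) (Theta_Gamma c ep em q qt)
    = (\<Sum>a\<in>{True, False}. \<Sum>b\<in>{True, False}. LINT z:{0<..} \<times> {0<..}|lborel \<Otimes>\<^sub>M lborel.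
         (p (fst z) + (if a then 1 else -1) * pt (fst z)) / sqrt 2
         * ((q (snd z) + (if b then 1 else -1) * qt (snd z)) / sqrt 2)
         * ray_kernel (if a = b then 1 else ep \<bullet> em) z)"
proof -
  define e where "e a = (if a then ep else em)" for a
  have "ep \<noteq> 0"
    using unit by auto
  with assms have Theta: "Theta_Gamma c ep em f g (c + s *\<^sub>R e a)
      = (f s + (if a then 1 else -1) * g s) / sqrt 2" if "0 < s" for f g a s
    using that by (cases a) (auto simp: e_def Theta_Gamma_plus_ray Theta_Gamma_minus_ray)
  have "e a \<bullet> e b = (if a = b then 1 else ep \<bullet> em)" for a b
    using unit by (auto simp: e_def dot_square_norm inner_commute)
  then have kernel: "norm (t *\<^sub>R e b - s *\<^sub>R e a) powr (-1/2)
      = ray_kernel (if a = b then 1 else ep \<bullet> em) (s, t)" for a b s t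
    using norm_diff_scaleR_unit_powr[of "e a" "e b"] unit by (simp add: e_def)
  show ?thesis
    unfolding A_Gamma_pairing_def Gamma_Gamma_integral_def e_def[symmetric]
    by (intro sum.cong refl set_lebesgue_integral_cong) (auto simp: Theta kernel[simplified])
qed

lemma A_Gamma_pairing_Theta_Gamma:
  fixes c ep em :: "real^2"
  assumes unit: "norm ep = 1" "norm em = 1" and angle: "ep \<bullet> em < 1"
    and Cc: "Cc_Rplus p" "Cc_Rplus pt" "Cc_Rplus q" "Cc_Rplus qt"
  shows "A_Gamma_pairing c ep em (Theta_Gamma c ep em p pt) (Theta_Gamma c ep em q qt)
    = (LINT z:{0<..} \<times> {0<..}|lborel \<Otimes>\<^sub>M lborel.
         p (fst z) * q (snd z) * (ray_kernel 1 z + ray_kernel (ep \<bullet> em) z))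
    + (LINT z:{0<..} \<times> {0<..}|lborel \<Otimes>\<^sub>M lborel.
         pt (fst z) * qt (snd z) * (ray_kernel 1 z - ray_kernel (ep \<bullet> em) z))"
    (is "_ = (LINT z:?D|?M. ?g1 z) + (LINT z:?D|?M. ?g2 z)")
proof -
  define \<gamma> where "\<gamma> = ep \<bullet> em"
  define \<sigma> :: "bool \<Rightarrow> real" where "\<sigma> a = (if a then 1 else -1)" for a
  define h where "h a b z = (p (fst z) + \<sigma> a * pt (fst z)) / sqrt 2
      * ((q (snd z) + \<sigma> b * qt (snd z)) / sqrt 2) * ray_kernel (if a = b then 1 else \<gamma>) z" for a b z
  have "ep \<noteq> em"
    using unit angle by (auto simp: dot_square_norm)
  have Cc_combination: "Cc_Rplus (\<lambda>s. (f s + \<sigma> a * g s) / sqrt 2)"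
    if "Cc_Rplus f" "Cc_Rplus g" for f g a
    using Cc_Rplus_lincomb[OF that, of "1 / sqrt 2" "\<sigma> a / sqrt 2"] by (simp add: add_divide_distrib)
  have singular: "weakly_singular_kernel (ray_kernel (if a = b then 1 else \<gamma>))" for a b
    using angle by (intro weakly_singular_ray_kernel) (simp add: \<gamma>_def)
  have h_integrable: "set_integrable ?M ?D (\<lambda>z. h a b z)" for a b
    unfolding h_def by (intro set_integrable_weakly_singular_kernel Cc_combination singular Cc)
  have "weakly_singular_kernel (\<lambda>z. ray_kernel 1 z + x * ray_kernel \<gamma> z)" for x
    using weakly_singular_kernel_lincomb[OF weakly_singular_ray_kernel weakly_singular_ray_kernel, of 1 \<gamma> 1 x]
      angle by (simp add: \<gamma>_def)
  from this[of 1] this[of "-1"] have "set_integrable ?M ?D ?g1" "set_integrable ?M ?D ?g2"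
    using Cc by (auto simp: \<gamma>_def intro!: set_integrable_weakly_singular_kernel)
  have "A_Gamma_pairing c ep em (Theta_Gamma c ep em p pt) (Theta_Gamma c ep em q qt)
      = (LINT z:?D|?M. h True True z) + (LINT z:?D|?M. h True False z)
        + ((LINT z:?D|?M. h False True z) + (LINT z:?D|?M. h False False z))"
    using A_Gamma_pairing_Theta_Gamma_eq_sum[OF unit \<open>ep \<noteq> em\<close>] by (simp add: h_def \<sigma>_def \<gamma>_def)
  also have "\<dots> = (LINT z:?D|?M. h True True z + h True False z + h False True z + h False False z)"
    using h_integrable by (simp add: set_integral_add)
  also have "\<dots> = (LINT z:?D|?M. ?g1 z + ?g2 z)"
    by (rule set_lebesgue_integral_cong) (auto simp: h_def \<sigma>_def \<gamma>_def field_simps)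
  also have "\<dots> = (LINT z:?D|?M. ?g1 z) + (LINT z:?D|?M. ?g2 z)"
    using \<open>set_integrable ?M ?D ?g1\<close> \<open>set_integrable ?M ?D ?g2\<close> by (rule set_integral_add)
  finally show ?thesis .
qed

lemma A_theta_pairing_eq_ray_kernel:
  "A_theta_pairing \<sigma> \<theta> p q = (LINT z:{0<..} \<times> {0<..}|lborel \<Otimes>\<^sub>M lborel.
     p (fst z) * q (snd z) * (ray_kernel 1 z + \<sigma> * ray_kernel (cos (2 * \<theta>)) z))"
  unfolding A_theta_pairing_def
proof (rule set_lebesgue_integral_cong)
  show "\<forall>z. z \<in> {0<..} \<times> {0<..} \<longrightarrow>
      (frakK 0 (snd z / fst z) + \<sigma> * frakK \<theta> (snd z / fst z)) * p (fst z) * q (snd z) * (fst z * snd z) powr (-1/4)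
    = p (fst z) * q (snd z) * (ray_kernel 1 z + \<sigma> * ray_kernel (cos (2 * \<theta>)) z)"
    using frakK_scaled_eq_ray_kernel[of _ _ 0] frakK_scaled_eq_ray_kernel[of _ _ \<theta>]
    by (auto simp: algebra_simps)
qed simp

lemma cos_less_one:
  assumes "0 < x" and "x < 2 * pi"
  shows "cos x < 1"
proof -
  have "cos x \<noteq> 1"
  proof
    assume "cos x = 1"
    then obtain n :: int where "x = of_int n * 2 * pi"
      using cos_one_2pi_int by blast
    with assms have "0 < n" and "n < 1"
      by (simp_all add: zero_less_mult_iff)
    then show False
      by simp
  qed
  then show ?thesis
    using cos_le_one[of x] by linarith
qed

theorem lemma1:
  fixes c ep em :: "real^2" and \<theta> :: real and p pt q qt :: "real \<Rightarrow> real"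
  assumes "norm ep = 1" and "norm em = 1"
    and "ep \<bullet> em = cos (2 * \<theta>)"
    and "0 < 2 * \<theta>" and "2 * \<theta> < 2 * pi"
    and "C0inf_Rplus p" and "C0inf_Rplus pt" and "C0inf_Rplus q" and "C0inf_Rplus qt"
  shows "A_Gamma_pairing c ep em (Theta_Gamma c ep em p pt) (Theta_Gamma c ep em q qt)
         = A_theta_pairing 1 \<theta> p q + A_theta_pairing (-1) \<theta> pt qt"
proof -
  have "ep \<bullet> em < 1"
    using assms(3) cos_less_one[OF assms(4,5)] by simp
  then show ?thesis
    using assms(3)
    by (simp add: A_Gamma_pairing_Theta_Gamma[OF assms(1,2)] A_theta_pairing_eq_ray_kernel
        Cc_Rplus_if_C0inf_Rplus assms(6-9))
qed

end
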